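(* Let $X_1,\dots,X_n$ be independent random vectors in $\mathbb{R}^d$, $\lambda>0$, $\tilde X_i=\mathrm{clip}(X_i,\lambda)$ and $\tilde X=\frac1n\sum_{i=1}^n\tilde X_i$. Then $\|\tilde X-\mathbb{E}[\tilde X]\|\le2\lambda$. Moreover, if for some $\sigma\ge0$ and $\alpha\in(1,2]$ we have $\mathbb{E}[X_i]=x_i\in\mathbb{R}^d$, $\mathbb{E}[\|X_i-x_i\|^\alpha]\le\sigma^\alpha$ and $\|x_i\|\le\lambda/2$ for all $i\in[n]$, then with $x=\frac1n\sum_{i=1}^nx_i$, $$\|\mathbb{E}[\tilde X]-x\|\le\frac{2^\alpha\sigma^\alpha}{\lambda^{\alpha-1}},\qquad\mathbb{E}\left[\|\tilde X-\mathbb{E}[\tilde X]\|^2\right]\le\frac{18\lambda^{2-\alpha}\sigma^\alpha}{n}.$$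
   Context: $\mathrm{clip}(y,\lambda)=\min\{1,\lambda/\|y\|\}y$ for $y\ne0$ and $\mathrm{clip}(0,\lambda)=0$. *)

theory Defs
  imports "HOL-Probability.Probability"
begin

definition clip :: "'a::real_normed_vector \<Rightarrow> real \<Rightarrow> 'a" where
  "clip y lam = (if y = 0 then 0 else min 1 (lam / norm y) *\<^sub>R y)"

end

theory Submission
  imports Defs
begin

(* Clipping at radius lam moves y only when norm y > lam, and then by norm y - lam. If
   norm x <= lam / 2, this displacement is at most t - lam / 2 with t = norm (y - x), so it
   vanishes unless t >= lam / 2, where t <= (2 / lam) powr (alpha - 1) * t powr alpha; taking
   expectations bounds the bias. Likewise norm (clip y - x) is at most both 2 lam and 2 t, so
   its square is at most (2 lam) powr (2 - alpha) * (2 t) powr alpha. For the variance, the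
   cross terms of the independent centred clipped vectors vanish, so the variance of the
   average is the sum of the individual variances over n^2, and each of these is at most the
   second moment of the clipped vector about x i. *)

lemma borel_measurable_clip [measurable]:
  "(\<lambda>y::'a::{real_normed_vector, second_countable_topology}. clip y lam) \<in> borel_measurable borel"
  unfolding clip_def by measurable

lemma norm_clip_le: "0 \<le> lam \<Longrightarrow> norm (clip y lam) \<le> lam"
  by (auto simp: clip_def min_def field_simps)

lemma clip_eq_self: "norm y \<le> lam \<Longrightarrow> clip y lam = y"
  by (auto simp: clip_def min_def field_simps)

lemma norm_clip_minus_self:
  assumes "0 \<le> lam" "lam < norm y"
  shows "norm (clip y lam - y) = norm y - lam"
proof -
  have "y \<noteq> 0" "lam / norm y \<le> 1"
    using assms by (auto simp: divide_le_eq_1)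
  have "clip y lam - y = (lam / norm y - 1) *\<^sub>R y"
    using assms \<open>y \<noteq> 0\<close> \<open>lam / norm y \<le> 1\<close> by (auto simp: clip_def min_def algebra_simps)
  also have "norm \<dots> = (1 - lam / norm y) * norm y"
    using \<open>lam / norm y \<le> 1\<close> by simp
  also have "\<dots> = norm y - lam"
    using \<open>y \<noteq> 0\<close> by (simp add: field_simps)
  finally show ?thesis .
qed

lemma norm_clip_minus_self_le:
  assumes "0 \<le> lam" "norm x \<le> lam / 2" "lam < norm y"
  shows "norm (clip y lam - y) + lam / 2 \<le> norm (y - x)"
  using norm_clip_minus_self[OF assms(1,3)] norm_triangle_sub[of y x] assms(2)
  by (simp add: norm_minus_commute)

lemma norm_clip_minus_self_le_powr:
  assumes "0 < lam" "norm x \<le> lam / 2" "1 \<le> \<alpha>"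
  shows "norm (clip y lam - y) \<le> 2 powr (\<alpha> - 1) * norm (y - x) powr \<alpha> / lam powr (\<alpha> - 1)"
proof (cases "norm y \<le> lam")
  case True
  then show ?thesis by (simp add: clip_eq_self)
next
  case False
  let ?t = "norm (y - x)"
  have t: "norm (clip y lam - y) + lam / 2 \<le> ?t"
    using norm_clip_minus_self_le[of lam x y] assms False by simp
  then have "lam / 2 \<le> ?t"
    using norm_ge_zero[of "clip y lam - y"] by linarith
  then have "(lam / 2) powr (\<alpha> - 1) \<le> ?t powr (\<alpha> - 1)"
    using assms by (intro powr_mono2) auto
  then have "?t * (lam / 2) powr (\<alpha> - 1) \<le> ?t * ?t powr (\<alpha> - 1)"
    by (simp add: mult_left_mono)
  also have "\<dots> = ?t powr \<alpha>"
    using powr_add[of ?t 1 "\<alpha> - 1"] \<open>lam / 2 \<le> ?t\<close> assms by simp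
  finally have "?t \<le> ?t powr \<alpha> / (lam / 2) powr (\<alpha> - 1)"
    using assms by (simp add: pos_le_divide_eq)
  also have "\<dots> = 2 powr (\<alpha> - 1) * ?t powr \<alpha> / lam powr (\<alpha> - 1)"
    by (simp add: powr_divide)
  finally show ?thesis
    using t assms by linarith
qed

lemma power2_le_powr_mult_powr:
  fixes t a b \<alpha> :: real
  assumes "0 \<le> t" "t \<le> a" "t \<le> b" "0 \<le> \<alpha>" "\<alpha> \<le> 2"
  shows "t\<^sup>2 \<le> a powr (2 - \<alpha>) * b powr \<alpha>"
proof (cases "t = 0")
  case False
  then have "t\<^sup>2 = t powr (2 - \<alpha>) * t powr \<alpha>"
    using assms by (simp add: powr_add[symmetric] powr_numeral)
  also have "\<dots> \<le> a powr (2 - \<alpha>) * b powr \<alpha>"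
    using assms by (intro mult_mono powr_mono2) auto
  finally show ?thesis .
qed simp

lemma power2_norm_clip_minus_le:
  assumes "0 \<le> lam" "norm x \<le> lam / 2" "0 \<le> \<alpha>" "\<alpha> \<le> 2"
  shows "(norm (clip y lam - x))\<^sup>2 \<le> 4 * lam powr (2 - \<alpha>) * norm (y - x) powr \<alpha>"
proof -
  let ?s = "norm (y - x)"
  have "norm (clip y lam - x) \<le> 2 * lam"
    using norm_triangle_ineq4[of "clip y lam" x] norm_clip_le[of lam y] assms by linarith
  moreover have "norm (clip y lam - x) \<le> 2 * ?s"
  proof (cases "norm y \<le> lam")
    case True
    then show ?thesis by (simp add: clip_eq_self)
  next
    case False
    then show ?thesis
      using norm_triangle_ineq[of "clip y lam - y" "y - x"] norm_clip_minus_self_le[of lam x y] assms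
      by simp
  qed
  ultimately have "(norm (clip y lam - x))\<^sup>2 \<le> (2 * lam) powr (2 - \<alpha>) * (2 * ?s) powr \<alpha>"
    using assms by (intro power2_le_powr_mult_powr) auto
  also have "\<dots> = 2 powr (2 - \<alpha>) * 2 powr \<alpha> * lam powr (2 - \<alpha>) * ?s powr \<alpha>"
    using assms by (simp add: powr_mult)
  also have "2 powr (2 - \<alpha>) * 2 powr \<alpha> = (4::real)"
    by (simp add: powr_add[symmetric])
  finally show ?thesis .
qed

lemma norm_average_le:
  fixes f :: "'i \<Rightarrow> 'b::real_normed_vector"
  assumes "\<And>i. i \<in> I \<Longrightarrow> norm (f i) \<le> c" "0 \<le> c"
  shows "norm ((1 / real (card I)) *\<^sub>R (\<Sum>i\<in>I. f i)) \<le> c"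
proof (cases "card I = 0")
  case False
  have "norm (\<Sum>i\<in>I. f i) \<le> real (card I) * c"
    using norm_sum[of f I] sum_mono[of I "\<lambda>i. norm (f i)" "\<lambda>_. c"] assms by simp
  then show ?thesis
    using False by (simp add: field_simps)
qed (use assms in simp)

lemma
  fixes f :: "'a \<Rightarrow> real"
  assumes [measurable]: "f \<in> borel_measurable M"
    and nonneg: "\<And>x. x \<in> space M \<Longrightarrow> 0 \<le> f x" and "0 \<le> c"
    and le: "(\<integral>\<^sup>+ x. ennreal (f x) \<partial>M) \<le> ennreal c"
  shows integrable_of_nn_integral_le: "integrable M f"
    and integral_le_of_nn_integral_le: "integral\<^sup>L M f \<le> c"
proof -
  show "integrable M f"
    using le nonneg by (intro integrableI_bounded) (auto simp: top.not_eq_extremum le_less_trans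
        cong: nn_integral_cong)
  then have "ennreal (integral\<^sup>L M f) = (\<integral>\<^sup>+ x. ennreal (f x) \<partial>M)"
    using nonneg by (intro nn_integral_eq_integral[symmetric]) auto
  with le have "ennreal (integral\<^sup>L M f) \<le> ennreal c"
    by simp
  then show "integral\<^sup>L M f \<le> c"
    using \<open>0 \<le> c\<close> by simp
qed

context prob_space
begin

lemma norm_expectation_le:
  fixes f :: "'a \<Rightarrow> 'b::{banach, second_countable_topology}"
  assumes "\<And>\<omega>. \<omega> \<in> space M \<Longrightarrow> norm (f \<omega>) \<le> c"
  shows "norm (expectation f) \<le> c"
proof (cases "integrable M f")
  case True
  have "norm (expectation f) \<le> expectation (\<lambda>\<omega>. norm (f \<omega>))"
    by (rule integral_norm_bound)
  also have "\<dots> \<le> expectation (\<lambda>_. c)"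
    using True assms by (intro integral_mono) auto
  finally show ?thesis
    by (simp add: prob_space)
next
  case False
  obtain \<omega> where "\<omega> \<in> space M"
    using not_empty by blast
  then have "0 \<le> c"
    using assms[of \<omega>] norm_ge_zero[of "f \<omega>"] by linarith
  then show ?thesis
    using False by (simp add: not_integrable_integral_eq)
qed

lemma norm_minus_expectation_le:
  fixes f :: "'a \<Rightarrow> 'b::{banach, second_countable_topology}"
  assumes "\<And>\<omega>. \<omega> \<in> space M \<Longrightarrow> norm (f \<omega>) \<le> c" "\<omega> \<in> space M"
  shows "norm (f \<omega> - expectation f) \<le> 2 * c"
  using norm_triangle_ineq4[of "f \<omega>" "expectation f"] norm_expectation_le[of f c] assms
  by fastforce

lemma
  fixes Y :: "'a \<Rightarrow> 'b::euclidean_space"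
  assumes "integrable M Y" "integrable M (\<lambda>\<omega>. (norm (Y \<omega>))\<^sup>2)"
  shows integrable_power2_norm_diff: "integrable M (\<lambda>\<omega>. (norm (Y \<omega> - a))\<^sup>2)"
    and expectation_power2_norm_diff:
      "expectation (\<lambda>\<omega>. (norm (Y \<omega> - a))\<^sup>2)
         = expectation (\<lambda>\<omega>. (norm (Y \<omega>))\<^sup>2) - 2 * (expectation Y \<bullet> a) + (norm a)\<^sup>2"
proof -
  have expand: "(norm (Y \<omega> - a))\<^sup>2 = (norm (Y \<omega>))\<^sup>2 - 2 * (Y \<omega> \<bullet> a) + (norm a)\<^sup>2" for \<omega>
    by (simp add: power2_norm_eq_inner inner_diff inner_commute)
  show "integrable M (\<lambda>\<omega>. (norm (Y \<omega> - a))\<^sup>2)"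
    unfolding expand using assms by auto
  show "expectation (\<lambda>\<omega>. (norm (Y \<omega> - a))\<^sup>2)
      = expectation (\<lambda>\<omega>. (norm (Y \<omega>))\<^sup>2) - 2 * (expectation Y \<bullet> a) + (norm a)\<^sup>2"
    unfolding expand using assms by (simp add: prob_space)
qed

lemma expectation_power2_norm_diff_centered:
  fixes Y :: "'a \<Rightarrow> 'b::euclidean_space"
  assumes "integrable M Y" "integrable M (\<lambda>\<omega>. (norm (Y \<omega>))\<^sup>2)"
  shows "expectation (\<lambda>\<omega>. (norm (Y \<omega> - a))\<^sup>2)
    = expectation (\<lambda>\<omega>. (norm (Y \<omega> - expectation Y))\<^sup>2) + (norm (expectation Y - a))\<^sup>2"
  using assms
  by (simp add: expectation_power2_norm_diff power2_norm_eq_inner inner_diff inner_commute prob_space)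

lemma
  fixes Z :: "'i \<Rightarrow> 'a \<Rightarrow> 'b::euclidean_space"
  assumes indep: "indep_vars (\<lambda>_. borel) Z I" and ij: "i \<in> I" "j \<in> I" "i \<noteq> j"
    and int: "integrable M (Z i)" "integrable M (Z j)"
  shows integrable_inner_indep: "integrable M (\<lambda>\<omega>. Z i \<omega> \<bullet> Z j \<omega>)"
    and expectation_inner_indep:
      "expectation (\<lambda>\<omega>. Z i \<omega> \<bullet> Z j \<omega>) = expectation (Z i) \<bullet> expectation (Z j)"
proof -
  have component: "integrable M (\<lambda>\<omega>. (Z i \<omega> \<bullet> b) * (Z j \<omega> \<bullet> b))
      \<and> expectation (\<lambda>\<omega>. (Z i \<omega> \<bullet> b) * (Z j \<omega> \<bullet> b))
          = (expectation (Z i) \<bullet> b) * (expectation (Z j) \<bullet> b)" for b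
  proof -
    define W where "W k = (\<lambda>\<omega>. Z k \<omega> \<bullet> b)" for k
    have "indep_vars (\<lambda>_. borel) W {i, j}"
      unfolding W_def
      by (rule indep_vars_compose2[OF indep_vars_subset[OF indep]]) (use ij in auto)
    moreover have "integrable M (W k)" if "k \<in> {i, j}" for k
      using that int by (auto simp: W_def)
    ultimately have "integrable M (\<lambda>\<omega>. \<Prod>k\<in>{i, j}. W k \<omega>)"
      and "expectation (\<lambda>\<omega>. \<Prod>k\<in>{i, j}. W k \<omega>) = (\<Prod>k\<in>{i, j}. expectation (W k))"
      using indep_vars_integrable[of "{i, j}" W] indep_vars_lebesgue_integral[of "{i, j}" W] by auto
    then show ?thesis
      using ij int by (simp add: W_def)
  qed
  have inner: "(\<lambda>\<omega>. Z i \<omega> \<bullet> Z j \<omega>) = (\<lambda>\<omega>. \<Sum>b\<in>Basis. (Z i \<omega> \<bullet> b) * (Z j \<omega> \<bullet> b))"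
    by (rule ext, rule euclidean_inner)
  show "integrable M (\<lambda>\<omega>. Z i \<omega> \<bullet> Z j \<omega>)"
    unfolding inner using component by auto
  have "expectation (\<lambda>\<omega>. Z i \<omega> \<bullet> Z j \<omega>)
      = (\<Sum>b\<in>Basis. (expectation (Z i) \<bullet> b) * (expectation (Z j) \<bullet> b))"
    unfolding inner using component by (simp add: Bochner_Integration.integral_sum)
  also have "\<dots> = expectation (Z i) \<bullet> expectation (Z j)"
    by (rule euclidean_inner[symmetric])
  finally show "expectation (\<lambda>\<omega>. Z i \<omega> \<bullet> Z j \<omega>) = expectation (Z i) \<bullet> expectation (Z j)" .
qed

lemma expectation_power2_norm_sum_indep:
  fixes Z :: "'i \<Rightarrow> 'a \<Rightarrow> 'b::euclidean_space"
  assumes "finite I" and indep: "indep_vars (\<lambda>_. borel) Z I"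
    and int: "\<And>i. i \<in> I \<Longrightarrow> integrable M (Z i)"
    and int2: "\<And>i. i \<in> I \<Longrightarrow> integrable M (\<lambda>\<omega>. (norm (Z i \<omega>))\<^sup>2)"
    and mean: "\<And>i. i \<in> I \<Longrightarrow> expectation (Z i) = 0"
  shows "expectation (\<lambda>\<omega>. (norm (\<Sum>i\<in>I. Z i \<omega>))\<^sup>2) = (\<Sum>i\<in>I. expectation (\<lambda>\<omega>. (norm (Z i \<omega>))\<^sup>2))"
proof -
  have int_inner: "integrable M (\<lambda>\<omega>. Z i \<omega> \<bullet> Z j \<omega>)" if "i \<in> I" "j \<in> I" for i j
    using that int2[of i] integrable_inner_indep[OF indep that _ int[of i] int[of j]]
    by (cases "i = j") (auto simp: power2_norm_eq_inner)
  have expectation_inner: "expectation (\<lambda>\<omega>. Z i \<omega> \<bullet> Z j \<omega>)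
      = (if i = j then expectation (\<lambda>\<omega>. (norm (Z i \<omega>))\<^sup>2) else 0)" if "i \<in> I" "j \<in> I" for i j
    using that expectation_inner_indep[OF indep that _ int[of i] int[of j]] mean[of i]
    by (auto simp: power2_norm_eq_inner)
  have "(\<lambda>\<omega>. (norm (\<Sum>i\<in>I. Z i \<omega>))\<^sup>2) = (\<lambda>\<omega>. \<Sum>i\<in>I. \<Sum>j\<in>I. Z i \<omega> \<bullet> Z j \<omega>)"
    unfolding power2_norm_eq_inner inner_sum_left inner_sum_right by (subst sum.swap) (rule refl)
  then have "expectation (\<lambda>\<omega>. (norm (\<Sum>i\<in>I. Z i \<omega>))\<^sup>2)
      = (\<Sum>i\<in>I. \<Sum>j\<in>I. expectation (\<lambda>\<omega>. Z i \<omega> \<bullet> Z j \<omega>))"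
    using int_inner by (simp add: Bochner_Integration.integral_sum Bochner_Integration.integrable_sum)
  also have "\<dots> = (\<Sum>i\<in>I. expectation (\<lambda>\<omega>. (norm (Z i \<omega>))\<^sup>2))"
    using \<open>finite I\<close> by (simp add: expectation_inner cong: sum.cong)
  finally show ?thesis .
qed

lemma expectation_power2_norm_centered_average:
  fixes Y :: "'i \<Rightarrow> 'a \<Rightarrow> 'b::euclidean_space"
  assumes "finite I" and indep: "indep_vars (\<lambda>_. borel) Y I"
    and int: "\<And>i. i \<in> I \<Longrightarrow> integrable M (Y i)"
    and int2: "\<And>i. i \<in> I \<Longrightarrow> integrable M (\<lambda>\<omega>. (norm (Y i \<omega>))\<^sup>2)"
  defines "A \<equiv> \<lambda>\<omega>. (1 / real (card I)) *\<^sub>R (\<Sum>i\<in>I. Y i \<omega>)"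
  shows "expectation (\<lambda>\<omega>. (norm (A \<omega> - expectation A))\<^sup>2)
    = (\<Sum>i\<in>I. expectation (\<lambda>\<omega>. (norm (Y i \<omega> - expectation (Y i)))\<^sup>2)) / (real (card I))\<^sup>2"
proof -
  define Z where "Z i = (\<lambda>\<omega>. Y i \<omega> - expectation (Y i))" for i
  have "A \<omega> - expectation A = (1 / real (card I)) *\<^sub>R (\<Sum>i\<in>I. Z i \<omega>)" for \<omega>
    using int by (simp add: A_def Z_def Bochner_Integration.integral_sum sum_subtractf scaleR_diff_right)
  then have "expectation (\<lambda>\<omega>. (norm (A \<omega> - expectation A))\<^sup>2)
      = expectation (\<lambda>\<omega>. (norm (\<Sum>i\<in>I. Z i \<omega>))\<^sup>2) / (real (card I))\<^sup>2"
    by (simp add: power_divide)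
  also have "expectation (\<lambda>\<omega>. (norm (\<Sum>i\<in>I. Z i \<omega>))\<^sup>2) = (\<Sum>i\<in>I. expectation (\<lambda>\<omega>. (norm (Z i \<omega>))\<^sup>2))"
  proof (rule expectation_power2_norm_sum_indep[OF \<open>finite I\<close>])
    show "indep_vars (\<lambda>_. borel) Z I"
      unfolding Z_def by (rule indep_vars_compose2[OF indep]) simp
    show "integrable M (Z i)" "integrable M (\<lambda>\<omega>. (norm (Z i \<omega>))\<^sup>2)" "expectation (Z i) = 0"
      if "i \<in> I" for i
      using int[OF that] int2[OF that] integrable_power2_norm_diff
      by (auto simp: Z_def prob_space)
  qed
  finally show ?thesis
    by (simp add: Z_def)
qed

lemma
  fixes X :: "'a \<Rightarrow> 'b::euclidean_space"
  assumes "X \<in> borel_measurable M" "0 \<le> lam"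
  shows integrable_clip: "integrable M (\<lambda>\<omega>. clip (X \<omega>) lam)"
    and integrable_power2_norm_clip: "integrable M (\<lambda>\<omega>. (norm (clip (X \<omega>) lam))\<^sup>2)"
proof -
  have "norm (clip (X \<omega>) lam) \<le> lam" "(norm (clip (X \<omega>) lam))\<^sup>2 \<le> lam\<^sup>2" for \<omega>
    using norm_clip_le[OF assms(2)] norm_ge_zero by (blast, blast intro: power_mono)
  then show "integrable M (\<lambda>\<omega>. clip (X \<omega>) lam)" "integrable M (\<lambda>\<omega>. (norm (clip (X \<omega>) lam))\<^sup>2)"
    using assms(1) by (auto intro: integrable_const_bound[where B=lam] integrable_const_bound[where B="lam\<^sup>2"])
qed

lemma norm_expectation_clip_minus_le:
  fixes X :: "'a \<Rightarrow> 'b::euclidean_space"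
  assumes "0 < lam" "norm x \<le> lam / 2" "1 \<le> \<alpha>"
    and int: "integrable M X" "integrable M (\<lambda>\<omega>. norm (X \<omega> - x) powr \<alpha>)"
  shows "norm (expectation (\<lambda>\<omega>. clip (X \<omega>) lam) - expectation X)
    \<le> 2 powr (\<alpha> - 1) * expectation (\<lambda>\<omega>. norm (X \<omega> - x) powr \<alpha>) / lam powr (\<alpha> - 1)"
proof -
  have int_clip: "integrable M (\<lambda>\<omega>. clip (X \<omega>) lam)"
    using int assms by (intro integrable_clip) auto
  have "norm (expectation (\<lambda>\<omega>. clip (X \<omega>) lam) - expectation X)
      = norm (expectation (\<lambda>\<omega>. clip (X \<omega>) lam - X \<omega>))"
    using int_clip int by simp
  also have "\<dots> \<le> expectation (\<lambda>\<omega>. norm (clip (X \<omega>) lam - X \<omega>))"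
    by (rule integral_norm_bound)
  also have "\<dots> \<le> expectation (\<lambda>\<omega>. 2 powr (\<alpha> - 1) * norm (X \<omega> - x) powr \<alpha> / lam powr (\<alpha> - 1))"
    using int_clip int assms by (intro integral_mono norm_clip_minus_self_le_powr) auto
  finally show ?thesis
    by simp
qed

lemma expectation_power2_norm_clip_centered_le:
  fixes X :: "'a \<Rightarrow> 'b::euclidean_space"
  assumes "0 \<le> lam" "norm x \<le> lam / 2" "0 \<le> \<alpha>" "\<alpha> \<le> 2"
    and [measurable]: "X \<in> borel_measurable M"
    and int: "integrable M (\<lambda>\<omega>. norm (X \<omega> - x) powr \<alpha>)"
  defines "Y \<equiv> \<lambda>\<omega>. clip (X \<omega>) lam"
  shows "expectation (\<lambda>\<omega>. (norm (Y \<omega> - expectation Y))\<^sup>2)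
    \<le> 4 * lam powr (2 - \<alpha>) * expectation (\<lambda>\<omega>. norm (X \<omega> - x) powr \<alpha>)"
proof -
  have int_Y: "integrable M Y" "integrable M (\<lambda>\<omega>. (norm (Y \<omega>))\<^sup>2)"
    unfolding Y_def using assms by (auto intro: integrable_clip integrable_power2_norm_clip)
  have "expectation (\<lambda>\<omega>. (norm (Y \<omega> - expectation Y))\<^sup>2) \<le> expectation (\<lambda>\<omega>. (norm (Y \<omega> - x))\<^sup>2)"
    using expectation_power2_norm_diff_centered[OF int_Y, of x] by simp
  also have "\<dots> \<le> expectation (\<lambda>\<omega>. 4 * lam powr (2 - \<alpha>) * norm (X \<omega> - x) powr \<alpha>)"
    using int int_Y assms unfolding Y_def
    by (intro integral_mono integrable_power2_norm_diff power2_norm_clip_minus_le) auto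
  finally show ?thesis
    by simp
qed

lemma norm_expectation_clipped_average_minus_le:
  fixes X :: "'i \<Rightarrow> 'a \<Rightarrow> 'b::euclidean_space"
  assumes "finite I" "0 < lam" "1 \<le> \<alpha>" "0 \<le> s"
    and int: "\<And>i. i \<in> I \<Longrightarrow> integrable M (X i)"
    and x: "\<And>i. i \<in> I \<Longrightarrow> norm (x i) \<le> lam / 2"
    and moment: "\<And>i. i \<in> I \<Longrightarrow> integrable M (\<lambda>\<omega>. norm (X i \<omega> - x i) powr \<alpha>)"
      "\<And>i. i \<in> I \<Longrightarrow> expectation (\<lambda>\<omega>. norm (X i \<omega> - x i) powr \<alpha>) \<le> s"
  shows "norm (expectation (\<lambda>\<omega>. (1 / real (card I)) *\<^sub>R (\<Sum>i\<in>I. clip (X i \<omega>) lam))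
      - (1 / real (card I)) *\<^sub>R (\<Sum>i\<in>I. expectation (X i)))
    \<le> 2 powr (\<alpha> - 1) * s / lam powr (\<alpha> - 1)"
proof -
  have "expectation (\<lambda>\<omega>. (1 / real (card I)) *\<^sub>R (\<Sum>i\<in>I. clip (X i \<omega>) lam))
      - (1 / real (card I)) *\<^sub>R (\<Sum>i\<in>I. expectation (X i))
    = (1 / real (card I)) *\<^sub>R (\<Sum>i\<in>I. expectation (\<lambda>\<omega>. clip (X i \<omega>) lam) - expectation (X i))"
    using int \<open>0 < lam\<close>
    by (simp add: integrable_clip Bochner_Integration.integral_sum sum_subtractf scaleR_diff_right)
  also have "norm \<dots> \<le> 2 powr (\<alpha> - 1) * s / lam powr (\<alpha> - 1)"
  proof (rule norm_average_le)
    fix i assume "i \<in> I"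
    have "norm (expectation (\<lambda>\<omega>. clip (X i \<omega>) lam) - expectation (X i))
        \<le> 2 powr (\<alpha> - 1) * expectation (\<lambda>\<omega>. norm (X i \<omega> - x i) powr \<alpha>) / lam powr (\<alpha> - 1)"
      using assms \<open>i \<in> I\<close> by (intro norm_expectation_clip_minus_le) auto
    also have "\<dots> \<le> 2 powr (\<alpha> - 1) * s / lam powr (\<alpha> - 1)"
      using moment(2)[OF \<open>i \<in> I\<close>] by (intro divide_right_mono mult_left_mono) auto
    finally show "norm (expectation (\<lambda>\<omega>. clip (X i \<omega>) lam) - expectation (X i))
        \<le> 2 powr (\<alpha> - 1) * s / lam powr (\<alpha> - 1)" .
  qed (use \<open>0 \<le> s\<close> in simp)
  finally show ?thesis .
qed

lemma expectation_power2_norm_clipped_average_centered_le: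
  fixes X :: "'i \<Rightarrow> 'a \<Rightarrow> 'b::euclidean_space"
  assumes "finite I" and indep: "indep_vars (\<lambda>_. borel) X I"
    and "0 \<le> lam" "0 \<le> \<alpha>" "\<alpha> \<le> 2"
    and x: "\<And>i. i \<in> I \<Longrightarrow> norm (x i) \<le> lam / 2"
    and moment: "\<And>i. i \<in> I \<Longrightarrow> integrable M (\<lambda>\<omega>. norm (X i \<omega> - x i) powr \<alpha>)"
      "\<And>i. i \<in> I \<Longrightarrow> expectation (\<lambda>\<omega>. norm (X i \<omega> - x i) powr \<alpha>) \<le> s"
  defines "A \<equiv> \<lambda>\<omega>. (1 / real (card I)) *\<^sub>R (\<Sum>i\<in>I. clip (X i \<omega>) lam)"
  shows "expectation (\<lambda>\<omega>. (norm (A \<omega> - expectation A))\<^sup>2) \<le> 4 * lam powr (2 - \<alpha>) * s / real (card I)"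
proof -
  define Y where "Y i = (\<lambda>\<omega>. clip (X i \<omega>) lam)" for i
  have X_measurable[measurable]: "X i \<in> borel_measurable M" if "i \<in> I" for i
    using indep that by (auto simp: indep_vars_def)
  have "expectation (\<lambda>\<omega>. (norm (A \<omega> - expectation A))\<^sup>2)
      = (\<Sum>i\<in>I. expectation (\<lambda>\<omega>. (norm (Y i \<omega> - expectation (Y i)))\<^sup>2)) / (real (card I))\<^sup>2"
    unfolding A_def Y_def
  proof (rule expectation_power2_norm_centered_average[OF \<open>finite I\<close>])
    show "indep_vars (\<lambda>_. borel) (\<lambda>i \<omega>. clip (X i \<omega>) lam) I"
      by (rule indep_vars_compose2[OF indep]) simp
  qed (use \<open>0 \<le> lam\<close> in \<open>auto intro: integrable_clip integrable_power2_norm_clip\<close>)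
  also have "\<dots> \<le> (\<Sum>i\<in>I. 4 * lam powr (2 - \<alpha>) * s) / (real (card I))\<^sup>2"
  proof (intro divide_right_mono sum_mono)
    fix i assume "i \<in> I"
    have "expectation (\<lambda>\<omega>. (norm (Y i \<omega> - expectation (Y i)))\<^sup>2)
        \<le> 4 * lam powr (2 - \<alpha>) * expectation (\<lambda>\<omega>. norm (X i \<omega> - x i) powr \<alpha>)"
      unfolding Y_def using assms \<open>i \<in> I\<close> by (intro expectation_power2_norm_clip_centered_le) auto
    also have "\<dots> \<le> 4 * lam powr (2 - \<alpha>) * s"
      using moment(2)[OF \<open>i \<in> I\<close>] by (intro mult_left_mono) auto
    finally show "expectation (\<lambda>\<omega>. (norm (Y i \<omega> - expectation (Y i)))\<^sup>2) \<le> 4 * lam powr (2 - \<alpha>) * s" .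
  qed simp
  also have "\<dots> = 4 * lam powr (2 - \<alpha>) * s / real (card I)"
    by (simp add: power2_eq_square)
  finally show ?thesis .
qed

end

theorem lemmaB3:
  fixes M :: "'a measure" and X :: "nat \<Rightarrow> 'a \<Rightarrow> 'b::euclidean_space"
    and n :: nat and lam :: real and Xt :: "'a \<Rightarrow> 'b"
  assumes "prob_space M"
    and "prob_space.indep_vars M (\<lambda>_. borel) X {1..n}"
    and "lam > 0"
  defines "Xt \<equiv> (\<lambda>\<omega>. (1 / real n) *\<^sub>R (\<Sum>i=1..n. clip (X i \<omega>) lam))"
  shows "(\<forall>\<omega>\<in>space M. norm (Xt \<omega> - integral\<^sup>L M Xt) \<le> 2 * lam)
    \<and> (\<forall>(\<sigma>::real) (\<alpha>::real) (x::nat \<Rightarrow> 'b).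
         (\<sigma> \<ge> 0 \<and> 1 < \<alpha> \<and> \<alpha> \<le> 2
          \<and> (\<forall>i\<in>{1..n}. integrable M (X i) \<and> integral\<^sup>L M (X i) = x i
                \<and> (\<integral>\<^sup>+ \<omega>. ennreal (norm (X i \<omega> - x i) powr \<alpha>) \<partial>M) \<le> ennreal (\<sigma> powr \<alpha>)
                \<and> norm (x i) \<le> lam / 2))
         \<longrightarrow> (let xbar = (1 / real n) *\<^sub>R (\<Sum>i=1..n. x i) in
              norm (integral\<^sup>L M Xt - xbar) \<le> 2 powr \<alpha> * \<sigma> powr \<alpha> / lam powr (\<alpha> - 1)
              \<and> (\<integral>\<omega>. (norm (Xt \<omega> - integral\<^sup>L M Xt))\<^sup>2 \<partial>M)
                  \<le> 18 * lam powr (2 - \<alpha>) * \<sigma> powr \<alpha> / real n))"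
proof -
  interpret prob_space M by fact
  have Xt: "Xt = (\<lambda>\<omega>. (1 / real (card {1..n})) *\<^sub>R (\<Sum>i\<in>{1..n}. clip (X i \<omega>) lam))"
    by (simp add: Xt_def)
  have "norm (Xt \<omega>) \<le> lam" for \<omega>
    unfolding Xt using \<open>lam > 0\<close> by (intro norm_average_le norm_clip_le) auto
  then have deviation: "\<forall>\<omega>\<in>space M. norm (Xt \<omega> - expectation Xt) \<le> 2 * lam"
    by (blast intro: norm_minus_expectation_le)
  show ?thesis
  proof (intro conjI deviation allI impI, unfold Let_def, elim conjE, intro conjI)
    fix \<sigma> \<alpha> :: real and x :: "nat \<Rightarrow> 'b"
    assume "0 \<le> \<sigma>" "1 < \<alpha>" "\<alpha> \<le> 2" and hyps: "\<forall>i\<in>{1..n}. integrable M (X i) \<and> expectation (X i) = x i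
        \<and> (\<integral>\<^sup>+ \<omega>. ennreal (norm (X i \<omega> - x i) powr \<alpha>) \<partial>M) \<le> ennreal (\<sigma> powr \<alpha>) \<and> norm (x i) \<le> lam / 2"
    have moment: "integrable M (\<lambda>\<omega>. norm (X i \<omega> - x i) powr \<alpha>)"
      "expectation (\<lambda>\<omega>. norm (X i \<omega> - x i) powr \<alpha>) \<le> \<sigma> powr \<alpha>" if "i \<in> {1..n}" for i
    proof -
      let ?f = "\<lambda>\<omega>. norm (X i \<omega> - x i) powr \<alpha>"
      have [measurable]: "X i \<in> borel_measurable M"
        using hyps that by (auto intro: borel_measurable_integrable)
      show "integrable M ?f" "expectation ?f \<le> \<sigma> powr \<alpha>"
        using integrable_of_nn_integral_le[of ?f M "\<sigma> powr \<alpha>"] integral_le_of_nn_integral_le[of ?f M "\<sigma> powr \<alpha>"]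
          hyps that by auto
    qed
    have "norm (expectation Xt - (1 / real n) *\<^sub>R (\<Sum>i=1..n. x i))
        \<le> 2 powr (\<alpha> - 1) * \<sigma> powr \<alpha> / lam powr (\<alpha> - 1)"
      using norm_expectation_clipped_average_minus_le[of "{1..n}" lam \<alpha> "\<sigma> powr \<alpha>" X x]
        hyps moment \<open>lam > 0\<close> \<open>1 < \<alpha>\<close> by (simp add: Xt)
    also have "\<dots> \<le> 2 powr \<alpha> * \<sigma> powr \<alpha> / lam powr (\<alpha> - 1)"
      by (intro divide_right_mono mult_right_mono powr_mono) auto
    finally show "norm (expectation Xt - (1 / real n) *\<^sub>R (\<Sum>i=1..n. x i))
        \<le> 2 powr \<alpha> * \<sigma> powr \<alpha> / lam powr (\<alpha> - 1)" .
    have "expectation (\<lambda>\<omega>. (norm (Xt \<omega> - expectation Xt))\<^sup>2) \<le> 4 * lam powr (2 - \<alpha>) * \<sigma> powr \<alpha> / real n"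
      using expectation_power2_norm_clipped_average_centered_le[of "{1..n}" X lam \<alpha> x "\<sigma> powr \<alpha>"]
        assms(2) hyps moment \<open>lam > 0\<close> \<open>1 < \<alpha>\<close> \<open>\<alpha> \<le> 2\<close> by (simp add: Xt)
    also have "\<dots> \<le> 18 * lam powr (2 - \<alpha>) * \<sigma> powr \<alpha> / real n"
      by (intro divide_right_mono mult_right_mono) auto
    finally show "expectation (\<lambda>\<omega>. (norm (Xt \<omega> - expectation Xt))\<^sup>2)
        \<le> 18 * lam powr (2 - \<alpha>) * \<sigma> powr \<alpha> / real n" .
  qed
qed

end
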